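(* Let $\mathfrak{A}$ be a $(\circ,\wedge,\mathsf{A})$-algebra that is completely representable by partial functions. Then composition in $\mathfrak{A}$ is completely left-distributive over joins and completely left-distributive over meets: for every $a\in\mathfrak{A}$, (i) for every $S\subseteq\mathfrak{A}$ such that $\bigvee S$ exists, $\bigvee\{a\circ s\mid s\in S\}$ exists and equals $a\circ\bigvee S$; (ii) for every nonempty $S\subseteq\mathfrak{A}$ such that $\bigwedge S$ exists, $\bigwedge\{a\circ s\mid s\in S\}$ exists and equals $a\circ\bigwedge S$.
   Context: A $(\circ,\wedge,\mathsf{A})$-algebra is a set with two binary operations $\circ,\wedge$ and one unary operation $\mathsf{A}$. An algebra of partial functions of this signature is a set of partial functions, with base $X$ the union of all their domains and ranges, closed under: composition $f\circ g=\{(x,z)\mid \exists y\,(x,y)\in f,(y,z)\in g\}$ (apply $f$ first, then $g$); intersection; antidomain $\mathsf{A}(f)=\{(x,x)\mid x\in X, x\notin\mathrm{dom}(f)\}$. A representation by partial functions is an isomorphism onto such an algebra. The order is $a\le b\iff a\wedge b=a$. A representation $\theta$ is complete if for every nonempty $S$ with $\bigwedge S$ existing, $\theta(\bigwedge S)=\bigcap\theta[S]$ (equivalently, for every $S$ with $\bigvee S$ existing, $\theta(\bigvee S)=\bigcup\theta[S]$). An algebra is completely representable if it has a complete representation. *)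

theory Defs
  imports Main
begin

text \<open>A (comp, meet, A)-algebra is modelled by a type 'a together with two binary
operations cmp, mt and a unary operation ad (antidomain).
The order: a \<le> b iff a \<wedge> b = a.\<close>

definition alg_le :: "('a \<Rightarrow> 'a \<Rightarrow> 'a) \<Rightarrow> 'a \<Rightarrow> 'a \<Rightarrow> bool" where
  "alg_le mt a b \<longleftrightarrow> mt a b = a"

definition is_join :: "('a \<Rightarrow> 'a \<Rightarrow> 'a) \<Rightarrow> 'a set \<Rightarrow> 'a \<Rightarrow> bool" where
  "is_join mt S j \<longleftrightarrow> (\<forall>s\<in>S. alg_le mt s j) \<and>
     (\<forall>u. (\<forall>s\<in>S. alg_le mt s u) \<longrightarrow> alg_le mt j u)"

definition is_meet :: "('a \<Rightarrow> 'a \<Rightarrow> 'a) \<Rightarrow> 'a set \<Rightarrow> 'a \<Rightarrow> bool" where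
  "is_meet mt S m \<longleftrightarrow> (\<forall>s\<in>S. alg_le mt m s) \<and>
     (\<forall>l. (\<forall>s\<in>S. alg_le mt l s) \<longrightarrow> alg_le mt l m)"

definition rep_base :: "('a \<Rightarrow> ('b \<times> 'b) set) \<Rightarrow> 'b set" where
  "rep_base \<theta> = (\<Union>a. Domain (\<theta> a) \<union> Range (\<theta> a))"

text \<open>Composition f;g applies f first, then g: this is relcomp (O).
Antidomain: identity on the base points outside the domain.\<close>
definition pf_antidom :: "'b set \<Rightarrow> ('b \<times> 'b) set \<Rightarrow> ('b \<times> 'b) set" where
  "pf_antidom X f = Id_on (X - Domain f)"

definition pf_representation ::
  "('a \<Rightarrow> 'a \<Rightarrow> 'a) \<Rightarrow> ('a \<Rightarrow> 'a \<Rightarrow> 'a) \<Rightarrow> ('a \<Rightarrow> 'a) \<Rightarrow> ('a \<Rightarrow> ('b \<times> 'b) set) \<Rightarrow> bool" where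
  "pf_representation cmp mt ad \<theta> \<longleftrightarrow>
     inj \<theta> \<and> (\<forall>a. single_valued (\<theta> a)) \<and>
     (\<forall>a b. \<theta> (cmp a b) = \<theta> a O \<theta> b) \<and>
     (\<forall>a b. \<theta> (mt a b) = \<theta> a \<inter> \<theta> b) \<and>
     (\<forall>a. \<theta> (ad a) = pf_antidom (rep_base \<theta>) (\<theta> a))"

definition complete_pf_representation ::
  "('a \<Rightarrow> 'a \<Rightarrow> 'a) \<Rightarrow> ('a \<Rightarrow> 'a \<Rightarrow> 'a) \<Rightarrow> ('a \<Rightarrow> 'a) \<Rightarrow> ('a \<Rightarrow> ('b \<times> 'b) set) \<Rightarrow> bool" where
  "complete_pf_representation cmp mt ad \<theta> \<longleftrightarrow>
     pf_representation cmp mt ad \<theta> \<and>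
     (\<forall>S m. S \<noteq> {} \<longrightarrow> is_meet mt S m \<longrightarrow> \<theta> m = \<Inter> (\<theta> ` S))"

end

theory Submission
  imports Defs
begin

(* A representation \<theta> by partial functions is an order embedding:
   a \<le> b holds iff \<theta> a \<subseteq> \<theta> b.  Hence an element is the join (meet) of S as soon
   as its image is the union (intersection) of the images of S.
   Completeness of \<theta> says meets are sent to intersections; we first show that
   joins are then sent to unions as well.  An empty join j lies below every
   element, in particular below A(j);j, which denotes the empty function; for a
   nonempty join j of S, A(j) is the meet of the A(s), s \<in> S, so
   by completeness the points outside every dom(\<theta> s) are exactly those outside
   dom(\<theta> j), and single-valuedness finishes the argument.
   The theorem then follows from two facts about relations: left composition
   distributes over arbitrary unions, and composition on the left with a
   single-valued relation distributes over nonempty intersections. *)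

text \<open>Left composition with a single-valued relation preserves nonempty
  intersections (for arbitrary relations only one inclusion holds).\<close>
lemma single_valued_relcomp_Inter:
  assumes sv: "single_valued f" and ne: "G \<noteq> {}"
  shows "f O \<Inter> G = (\<Inter>g\<in>G. f O g)"
proof
  show "f O \<Inter> G \<subseteq> (\<Inter>g\<in>G. f O g)" by blast
  show "(\<Inter>g\<in>G. f O g) \<subseteq> f O \<Inter> G"
  proof clarify
    fix x z assume xz: "(x, z) \<in> (\<Inter>g\<in>G. f O g)"
    from ne obtain g0 where "g0 \<in> G" by blast
    with xz obtain y where y: "(x, y) \<in> f" by blast
    have "(y, z) \<in> g" if "g \<in> G" for g
    proof -
      from xz that obtain y' where "(x, y') \<in> f" "(y', z) \<in> g" by blast
      with y sv show ?thesis by (metis single_valuedD)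
    qed
    with y show "(x, z) \<in> f O \<Inter> G" by blast
  qed
qed

lemma rep_le_iff:
  assumes "pf_representation cmp mt ad \<theta>"
  shows "alg_le mt a b \<longleftrightarrow> \<theta> a \<subseteq> \<theta> b"
proof -
  have inj: "inj \<theta>" and meet: "\<theta> (mt a b) = \<theta> a \<inter> \<theta> b"
    using assms unfolding pf_representation_def by auto
  have "alg_le mt a b \<longleftrightarrow> \<theta> (mt a b) = \<theta> a"
    unfolding alg_le_def using inj by (metis injD)
  also have "\<dots> \<longleftrightarrow> \<theta> a \<subseteq> \<theta> b" using meet by auto
  finally show ?thesis .
qed

lemma rep_is_join_if_Union:
  assumes "pf_representation cmp mt ad \<theta>" and "\<theta> j = (\<Union>s\<in>S. \<theta> s)"
  shows "is_join mt S j"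
  unfolding is_join_def rep_le_iff[OF assms(1)] assms(2) by blast

lemma rep_is_meet_if_Inter:
  assumes "pf_representation cmp mt ad \<theta>" and "\<theta> m = (\<Inter>s\<in>S. \<theta> s)"
  shows "is_meet mt S m"
  unfolding is_meet_def rep_le_iff[OF assms(1)] assms(2) by blast

lemma rep_antidom_iff:
  assumes "pf_representation cmp mt ad \<theta>"
  shows "(x, y) \<in> \<theta> (ad a) \<longleftrightarrow> x = y \<and> x \<in> rep_base \<theta> \<and> x \<notin> Domain (\<theta> a)"
  using assms unfolding pf_representation_def pf_antidom_def by auto

lemma Domain_rep_base: "Domain (\<theta> a) \<subseteq> rep_base \<theta>"
  unfolding rep_base_def by auto

lemma rep_antidom_comp_self:
  assumes "pf_representation cmp mt ad \<theta>"
  shows "\<theta> (cmp (ad a) a) = {}"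
  using assms rep_antidom_iff[OF assms] unfolding pf_representation_def by auto

text \<open>The empty join is the bottom element, represented by the empty function,
  since it lies below A(j);j.\<close>
lemma rep_empty_join:
  assumes rep: "pf_representation cmp mt ad \<theta>" and "is_join mt {} j"
  shows "\<theta> j = {}"
proof -
  have "alg_le mt j (cmp (ad j) j)"
    using assms(2) unfolding is_join_def by auto
  then show ?thesis
    using rep_antidom_comp_self[OF rep] rep_le_iff[OF rep] by auto
qed

text \<open>For a lower bound l of all A(s), the element A(l);j is an upper bound of S,
  so j lies below it and therefore dom(l) is disjoint from dom(j).\<close>
lemma rep_antidom_join_is_meet:
  assumes rep: "pf_representation cmp mt ad \<theta>"
    and ne: "S \<noteq> {}" and J: "is_join mt S j"
  shows "is_meet mt (ad ` S) (ad j)"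
proof -
  note le = rep_le_iff[OF rep] and AD = rep_antidom_iff[OF rep]
  have cmpr: "\<And>a b. \<theta> (cmp a b) = \<theta> a O \<theta> b"
    using rep unfolding pf_representation_def by auto
  have ub: "\<And>s. s \<in> S \<Longrightarrow> \<theta> s \<subseteq> \<theta> j"
    and lub: "\<And>u. \<forall>s\<in>S. \<theta> s \<subseteq> \<theta> u \<Longrightarrow> \<theta> j \<subseteq> \<theta> u"
    using J unfolding is_join_def le by auto
  show ?thesis
    unfolding is_meet_def le
  proof (intro conjI ballI allI impI)
    fix t assume "t \<in> ad ` S"
    then obtain s where "s \<in> S" "t = ad s" by auto
    with ub show "\<theta> (ad j) \<subseteq> \<theta> t" by (fastforce simp: AD)
  next
    fix l assume below: "\<forall>t\<in>ad ` S. \<theta> l \<subseteq> \<theta> t"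
    from ne obtain s0 where "s0 \<in> S" by auto
    with below have l_id: "\<theta> l \<subseteq> Id_on (rep_base \<theta>)" by (fastforce simp: AD)
    have disjoint: "Domain (\<theta> l) \<inter> Domain (\<theta> s) = {}" if "s \<in> S" for s
      using below that by (fastforce simp: AD)
    have "\<theta> s \<subseteq> \<theta> (cmp (ad l) j)" if "s \<in> S" for s
      using ub[OF that] disjoint[OF that] Domain_rep_base[of \<theta> s]
      by (fastforce simp: cmpr AD)
    then have "\<theta> j \<subseteq> \<theta> (ad l) O \<theta> j" using lub cmpr by blast
    then have "Domain (\<theta> j) \<inter> Domain (\<theta> l) = {}" by (fastforce simp: AD)
    with l_id show "\<theta> l \<subseteq> \<theta> (ad j)" by (fastforce simp: AD)
  qed
qed

text \<open>A pair (x,y) of \<theta> j either has x in some dom(\<theta> s),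
  and then (x,y) \<in> \<theta> s by single-valuedness, or x lies outside all of them,
  which by completeness means (x,x) \<in> \<theta>(A j), contradicting x \<in> dom(\<theta> j).\<close>
lemma complete_rep_join_Union:
  assumes c: "complete_pf_representation cmp mt ad \<theta>" and J: "is_join mt S j"
  shows "\<theta> j = (\<Union>s\<in>S. \<theta> s)"
proof -
  have rep: "pf_representation cmp mt ad \<theta>"
    and meet_Inter: "\<And>S m. S \<noteq> {} \<Longrightarrow> is_meet mt S m \<Longrightarrow> \<theta> m = \<Inter> (\<theta> ` S)"
    using c unfolding complete_pf_representation_def by auto
  note AD = rep_antidom_iff[OF rep]
  have sv: "single_valued (\<theta> j)" using rep unfolding pf_representation_def by auto
  have ub: "\<And>s. s \<in> S \<Longrightarrow> \<theta> s \<subseteq> \<theta> j"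
    using J unfolding is_join_def rep_le_iff[OF rep] by auto
  show ?thesis
  proof (cases "S = {}")
    case True
    with rep_empty_join[OF rep] J show ?thesis by simp
  next
    case ne: False
    have antidom_j: "\<theta> (ad j) = (\<Inter>s\<in>S. \<theta> (ad s))"
      using meet_Inter[OF _ rep_antidom_join_is_meet[OF rep ne J]] ne by (simp add: image_image)
    show ?thesis
    proof
      show "(\<Union>s\<in>S. \<theta> s) \<subseteq> \<theta> j" using ub by auto
      show "\<theta> j \<subseteq> (\<Union>s\<in>S. \<theta> s)"
      proof clarify
        fix x y assume xy: "(x, y) \<in> \<theta> j"
        show "(x, y) \<in> (\<Union>s\<in>S. \<theta> s)"
        proof (cases "\<exists>s\<in>S. x \<in> Domain (\<theta> s)")
          case True
          then obtain s y' where s: "s \<in> S" "(x, y') \<in> \<theta> s" by auto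
          with ub have "(x, y') \<in> \<theta> j" by blast
          with xy sv have "y' = y" by (metis single_valuedD)
          with s show ?thesis by auto
        next
          case False
          with xy Domain_rep_base[of \<theta> j] have "(x, x) \<in> \<theta> (ad j)"
            by (auto simp: antidom_j AD)
          with xy show ?thesis by (auto simp: AD)
        qed
      qed
    qed
  qed
qed

theorem mainTheorem10:
  fixes cmp mt :: "'a \<Rightarrow> 'a \<Rightarrow> 'a" and ad :: "'a \<Rightarrow> 'a"
    and \<theta> :: "'a \<Rightarrow> ('b \<times> 'b) set"
  assumes "complete_pf_representation cmp mt ad \<theta>"
  shows "(\<forall>a S j. is_join mt S j \<longrightarrow> is_join mt ((\<lambda>s. cmp a s) ` S) (cmp a j))
       \<and> (\<forall>a S m. S \<noteq> {} \<longrightarrow> is_meet mt S m \<longrightarrow> is_meet mt ((\<lambda>s. cmp a s) ` S) (cmp a m))"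
proof -
  have rep: "pf_representation cmp mt ad \<theta>"
    and meet_Inter: "\<And>S m. S \<noteq> {} \<Longrightarrow> is_meet mt S m \<Longrightarrow> \<theta> m = \<Inter> (\<theta> ` S)"
    using assms unfolding complete_pf_representation_def by auto
  have cmpr: "\<And>a b. \<theta> (cmp a b) = \<theta> a O \<theta> b"
    and sv: "\<And>a. single_valued (\<theta> a)"
    using rep unfolding pf_representation_def by auto
  have "is_join mt ((\<lambda>s. cmp a s) ` S) (cmp a j)" if "is_join mt S j" for a S j
  proof (rule rep_is_join_if_Union[OF rep])
    show "\<theta> (cmp a j) = (\<Union>t\<in>(\<lambda>s. cmp a s) ` S. \<theta> t)"
      by (simp add: cmpr complete_rep_join_Union[OF assms that] relcomp_UNION_distrib)
  qed
  moreover have "is_meet mt ((\<lambda>s. cmp a s) ` S) (cmp a m)"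
    if ne: "S \<noteq> {}" and "is_meet mt S m" for a S m
  proof (rule rep_is_meet_if_Inter[OF rep])
    have "\<theta> a O \<Inter> (\<theta> ` S) = (\<Inter>s\<in>S. \<theta> a O \<theta> s)"
      using single_valued_relcomp_Inter[OF sv, of "\<theta> ` S" a] ne by simp
    then show "\<theta> (cmp a m) = (\<Inter>t\<in>(\<lambda>s. cmp a s) ` S. \<theta> t)"
      by (simp add: cmpr meet_Inter[OF that])
  qed
  ultimately show ?thesis by blast
qed

end
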